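(* Let $0<v_T<\tfrac12$ and $V_u>0$, and set $g_{\max}=F'(v_i)$ and $$g_\ast=\frac{F'(v_i)\,v_i-F(v_i)}{V_u}.$$ Then $g_\ast>0$, and for every $g$ with $g_\ast\le g<g_{\max}$ and every $k\ge 0$, the central cell fires when $v_u$ is raised from $0$ to $V_u$ if and only if $$k<\frac{F'(v_i)}{g}-1.$$
   Context: Fix $v_T\in(0,\tfrac12)$ and let $F(v)=v(v-v_T)(1-v)$, with local minimum at $v_{\min}$, local maximum at $v_{\max}$, inflection point $v_i=(1+v_T)/3$; $0<v_{\min}<v_T<v_i<v_{\max}<1$. Central-cell model: for $g>0$, real $k\ge0$ and upstream voltage $v_u$, $\frac{dv}{dt}=F(v)+g(v_u-v)-gkv$; equilibria solve $F(v)=g(k+1)v-gv_u$. Firing: given $V_u>0$, the central cell fires when $v_u$ is raised from $0$ to $V_u$ if there exist $v_{u,c}\in(0,V_u)$ and $v^*\in(v_{\min},v_i)$ with $F(v^* )=g(k+1)v^*-gv_{u,c}$ and $F'(v^* )=g(k+1)$ (a saddle-node collision of the rest and threshold equilibria). *)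

theory Defs
  imports "HOL-Analysis.Analysis"
begin

definition F :: "real \<Rightarrow> real \<Rightarrow> real" where
  "F vT v = v * (v - vT) * (1 - v)"

definition v_i :: "real \<Rightarrow> real" where
  "v_i vT = (1 + vT) / 3"

text \<open>Local minimum of F: the smaller of the two critical points of F,
  i.e. the smaller root of F'(v) = -3 v^2 + 2 (1 + vT) v - vT.\<close>
definition v_min :: "real \<Rightarrow> real" where
  "v_min vT = ((1 + vT) - sqrt ((1 + vT)^2 - 3 * vT)) / 3"

text \<open>Firing criterion: saddle-node collision of rest and threshold equilibria
  for some upstream voltage v_{u,c} in (0, V_u), at some v* in (v_min, v_i).\<close>
definition fires :: "real \<Rightarrow> real \<Rightarrow> real \<Rightarrow> real \<Rightarrow> bool" where
  "fires vT g k Vu \<longleftrightarrow>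
     (\<exists>vuc vs. 0 < vuc \<and> vuc < Vu \<and> v_min vT < vs \<and> vs < v_i vT \<and>
        F vT vs = g * (k + 1) * vs - g * vuc \<and>
        deriv (F vT) vs = g * (k + 1))"

end

theory Submission
  imports Defs
begin

text \<open>
  F' is a downward parabola with vertex at the inflection point, so F'(v) = g (k + 1) has a
  solution left of v_i (and then automatically right of v_min) exactly when g (k + 1) < F'(v_i).
  At such a solution v*, the firing equation forces g v_{u,c} = v* F'(v*) - F(v*) = v*^2 (3 v_i - 2 v*),
  which increases on [0, v_i] up to v_i^3 = g_* V_u; hence g \<ge> g_* makes v_{u,c} < V_u automatic.
\<close>

lemma F_has_real_derivative:
  "(F vT has_real_derivative (-3 * x^2 + 2 * (1 + vT) * x - vT)) (at x)"
proof -
  have "F vT = (\<lambda>x. (1 + vT) * (x * x) - x * x * x - vT * x)"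
    by (rule ext) (simp add: F_def algebra_simps)
  then show ?thesis
    by (auto intro!: derivative_eq_intros simp: algebra_simps power2_eq_square)
qed

lemma deriv_F: "deriv (F vT) x = -3 * x^2 + 2 * (1 + vT) * x - vT"
  using F_has_real_derivative by (rule DERIV_imp_deriv)

lemma deriv_F_v_i: "deriv (F vT) (v_i vT) = ((1 + vT)^2 - 3 * vT) / 3"
  by (simp add: deriv_F v_i_def power2_eq_square field_simps)

lemma deriv_F_vertex_form: "deriv (F vT) x = deriv (F vT) (v_i vT) - 3 * (x - v_i vT)^2"
  by (simp add: deriv_F deriv_F_v_i v_i_def power2_eq_square field_simps)

lemma deriv_F_less_v_i:
  assumes "x \<noteq> v_i vT"
  shows "deriv (F vT) x < deriv (F vT) (v_i vT)"
  using assms by (subst deriv_F_vertex_form) simp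

lemma v_min_eq: "v_min vT = v_i vT - sqrt (deriv (F vT) (v_i vT) / 3)"
proof -
  have "sqrt ((1 + vT)^2 - 3 * vT) / 3 = sqrt (((1 + vT)^2 - 3 * vT) / 9)"
    by (simp add: real_sqrt_divide)
  then show ?thesis
    unfolding deriv_F_v_i by (simp add: v_min_def v_i_def diff_divide_distrib)
qed

lemma v_min_pos:
  assumes "0 < vT"
  shows "0 < v_min vT"
proof -
  have "(1 + vT)^2 - 3 * vT < (1 + vT)^2"
    using assms by simp
  then have "sqrt ((1 + vT)^2 - 3 * vT) < sqrt ((1 + vT)^2)"
    by (rule real_sqrt_less_mono)
  also have "\<dots> = 1 + vT"
    using assms by simp
  finally show ?thesis
    by (simp add: v_min_def)
qed

lemma deriv_F_attains:
  assumes "0 < G" and "G < deriv (F vT) (v_i vT)"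
  obtains x where "v_min vT < x" "x < v_i vT" "deriv (F vT) x = G"
proof
  define d where "d = sqrt ((deriv (F vT) (v_i vT) - G) / 3)"
  show "v_min vT < v_i vT - d"
    using assms by (simp add: v_min_eq d_def)
  show "v_i vT - d < v_i vT"
    using assms by (simp add: d_def)
  have "d^2 = (deriv (F vT) (v_i vT) - G) / 3"
    using assms by (simp add: d_def)
  then show "deriv (F vT) (v_i vT - d) = G"
    by (subst deriv_F_vertex_form) simp
qed

text \<open>The value of g v_u at which the equilibria collide in a saddle-node at v* = x.\<close>
definition saddle_node_input :: "real \<Rightarrow> real \<Rightarrow> real" where
  "saddle_node_input vT x = x * deriv (F vT) x - F vT x"

lemma saddle_node_input_eq: "saddle_node_input vT x = x^2 * (3 * v_i vT - 2 * x)"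
  by (simp add: saddle_node_input_def deriv_F F_def v_i_def power2_eq_square algebra_simps)

lemma saddle_node_input_v_i: "saddle_node_input vT (v_i vT) = v_i vT ^ 3"
  by (simp add: saddle_node_input_eq power2_eq_square power3_eq_cube)

lemma saddle_node_input_pos:
  assumes "0 < x" and "x < v_i vT"
  shows "0 < saddle_node_input vT x"
  using assms by (simp add: saddle_node_input_eq)

lemma saddle_node_input_less_v_i:
  assumes "0 \<le> x" and "x < v_i vT"
  shows "saddle_node_input vT x < v_i vT ^ 3"
proof -
  have "v_i vT ^ 3 - saddle_node_input vT x = (v_i vT - x)^2 * (v_i vT + 2 * x)"
    by (simp add: saddle_node_input_eq power2_eq_square power3_eq_cube algebra_simps)
  moreover have "0 < (v_i vT - x)^2 * (v_i vT + 2 * x)"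
    using assms by simp
  ultimately show ?thesis
    by linarith
qed

lemma fires_imp_less_deriv_F_v_i:
  assumes "fires vT g k Vu"
  shows "g * (k + 1) < deriv (F vT) (v_i vT)"
  using assms deriv_F_less_v_i unfolding fires_def by (metis order_less_irrefl)

lemma fires_if_less_deriv_F_v_i:
  assumes "0 < vT" and "0 < g" and "0 \<le> k"
    and "g * (k + 1) < deriv (F vT) (v_i vT)" and "v_i vT ^ 3 \<le> g * Vu"
  shows "fires vT g k Vu"
proof -
  obtain vs where vs: "v_min vT < vs" "vs < v_i vT" and deriv_vs: "deriv (F vT) vs = g * (k + 1)"
    using deriv_F_attains assms(2-4) by (metis add_nonneg_pos mult_pos_pos zero_less_one)
  define vuc where "vuc = saddle_node_input vT vs / g"
  have vs_pos: "0 < vs"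
    using v_min_pos[OF assms(1)] vs by linarith
  have "0 < vuc"
    using saddle_node_input_pos[OF vs_pos vs(2)] assms(2) by (simp add: vuc_def)
  moreover have "vuc < Vu"
    using saddle_node_input_less_v_i[of vs vT] vs_pos vs(2) assms(2,5)
    by (simp add: vuc_def divide_less_eq mult.commute)
  moreover have "F vT vs = g * (k + 1) * vs - g * vuc"
    using assms(2) deriv_vs by (simp add: vuc_def saddle_node_input_def)
  ultimately show ?thesis
    unfolding fires_def using vs deriv_vs assms(5) by (intro exI[of _ vuc] exI[of _ vs] conjI)
qed

theorem mainTheorem2:
  fixes vT Vu :: real
  assumes "0 < vT" and "vT < 1/2" and "0 < Vu"
  defines "gmax \<equiv> deriv (F vT) (v_i vT)"
      and "gstar \<equiv> (deriv (F vT) (v_i vT) * v_i vT - F vT (v_i vT)) / Vu"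
  shows "0 < gstar \<and>
         (\<forall>g k. gstar \<le> g \<longrightarrow> g < gmax \<longrightarrow> 0 \<le> k \<longrightarrow>
            (fires vT g k Vu \<longleftrightarrow> k < deriv (F vT) (v_i vT) / g - 1))"
proof -
  have gstar_eq: "gstar = v_i vT ^ 3 / Vu"
    using saddle_node_input_v_i[of vT]
    by (simp add: gstar_def saddle_node_input_def mult.commute)
  have gstar_pos: "0 < gstar"
    using assms(1,3) by (simp add: gstar_eq v_i_def)
  show ?thesis
  proof (intro conjI gstar_pos allI impI)
    fix g k :: real
    assume "gstar \<le> g" and "g < gmax" and "0 \<le> k"
    have "0 < g"
      using gstar_pos \<open>gstar \<le> g\<close> by linarith
    have "v_i vT ^ 3 \<le> g * Vu"
      using \<open>gstar \<le> g\<close> assms(3) by (simp add: gstar_eq divide_le_eq)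
    have "k < deriv (F vT) (v_i vT) / g - 1 \<longleftrightarrow> g * (k + 1) < deriv (F vT) (v_i vT)"
      using \<open>0 < g\<close> by (simp add: field_simps)
    also have "\<dots> \<longleftrightarrow> fires vT g k Vu"
      using fires_imp_less_deriv_F_v_i[of vT g k Vu] fires_if_less_deriv_F_v_i[OF assms(1) \<open>0 < g\<close> \<open>0 \<le> k\<close> _
        \<open>v_i vT ^ 3 \<le> g * Vu\<close>] by blast
    finally show "fires vT g k Vu \<longleftrightarrow> k < deriv (F vT) (v_i vT) / g - 1"
      by (rule sym)
  qed
qed

end
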